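(* For all positive integers $n$ and non-negative integers $k$, $$\det_{0\le i,j\le n-1}\big(MP_{i+j}(k)\big)=\det_{0\le i,j\le n-1}\Big(\sum_{\ell\ge0}\sum_{l=-k}^{k+1}\binom{i+j}{\ell,\ \ell+l}\Big)= \begin{cases}(-1)^{n_1\binom{k+1}2}, & n=(k+1)n_1,\\ (-1)^{n_1\binom{k+1}2}, & n=(k+1)n_1+1,\\ 0, & n\not\equiv0,1\pmod{k+1},\end{cases}$$ with $n_1$ a non-negative integer (for $k=0$, the first case is meant). In particular, for $k=0$, $\det_{0\le i,j\le n-1}(MP_{i+j})=1$ where $MP_m=MP_m(0)$ are the Motzkin prefix numbers.
   Context: $MP_m(k)$ denotes the number of lattice paths with $m$ steps from $\{(1,1),(1,0),(1,-1)\}$ starting at $(0,k)$ (with any end point) that never run below the $x$-axis. The trinomial coefficient is $\binom{m}{k_1,k_2}=\frac{m!}{k_1!\,k_2!\,(m-k_1-k_2)!}$, taken to be $0$ if any of $k_1,k_2,m-k_1-k_2$ is negative. *)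

theory Defs
  imports Main "Jordan_Normal_Form.Determinant"
begin

text \<open>A path with m steps is encoded by its list of vertical increments, each in
{-1,0,1}.\<close>
definition MP :: "nat \<Rightarrow> nat \<Rightarrow> nat" where
  "MP m k = card {s :: int list. set s \<subseteq> {-1, 0, 1} \<and> length s = m \<and>
                     (\<forall>j\<le>m. int k + sum_list (take j s) \<ge> 0)}"

definition trinom :: "nat \<Rightarrow> int \<Rightarrow> int \<Rightarrow> int" where
  "trinom m k1 k2 =
     (if k1 < 0 \<or> k2 < 0 \<or> int m - k1 - k2 < 0 then 0
      else int (fact m div (fact (nat k1) * fact (nat k2) * fact (m - nat k1 - nat k2))))"

end

theory Submission
  imports Defs "Jordan_Normal_Form.Char_Poly" "HOL-Computational_Algebra.Formal_Laurent_Series"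
begin

text \<open>
  Put \<open>z = x + 1 + x\<^sup>-\<^sup>1\<close> and let \<open>L\<^sub>k(p)\<close> be the constant term of
  \<open>p(z) (x\<^sup>-\<^sup>k\<^sup>-\<^sup>1 + \<dots> + x\<^sup>k)\<close>. By coefficient extraction the trinomial double sum
  is \<open>L\<^sub>k(z\<^sup>m)\<close>, and by the reflection principle so is \<open>MP\<^sub>m(k)\<close>; hence both matrices are
  the Hankel matrix of the moments of \<open>L\<^sub>k\<close>. Its determinant does not change when the rows and
  columns are indexed by monic polynomials \<open>P\<^sub>i\<close>, \<open>Q\<^sub>j\<close> of degrees \<open>i\<close>, \<open>j\<close> instead of
  \<open>z\<^sup>i\<close>, \<open>z\<^sup>j\<close>. Choosing Chebyshev polynomials of the third kind for \<open>P\<^sub>i\<close> and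
  combinations of \<open>(z - 3)\<close> times Chebyshev polynomials of the fourth kind for \<open>Q\<^sub>j\<close> turns
  \<open>L\<^sub>k(P\<^sub>i Q\<^sub>j)\<close> into a sparse matrix with entries in \<open>{-1, 0, 1}\<close>. After moving its last
  \<open>k\<close> columns to the front it is block triangular, and the determinant of the remaining
  \<open>(k + 1) \<times> (k + 1)\<close> corner depends only on \<open>n mod 2(k + 1)\<close>.
\<close>

definition lmonom :: "int \<Rightarrow> int fls" where
  "lmonom i = fls_X_intpow i"

lemma fls_nth_lmonom [simp]: "fls_nth (lmonom i) n = (if n = i then 1 else 0)"
  by (simp add: lmonom_def)

lemma lmonom_0 [simp]: "lmonom 0 = 1"
  by (simp add: lmonom_def)

lemma lmonom_mult_lmonom [simp]: "lmonom i * lmonom j = lmonom (i + j)"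
  unfolding lmonom_def by (rule fls_X_intpow_times_fls_X_intpow)

lemma fls_nth_lmonom_times [simp]: "fls_nth (lmonom i * f) n = fls_nth f (n - i)"
  and fls_nth_times_lmonom [simp]: "fls_nth (f * lmonom i) n = fls_nth f (n - i)"
  by (simp_all add: lmonom_def fls_X_intpow_times_conv_shift)

lemma one_plus_lmonom_1_neq_0: "1 + lmonom 1 \<noteq> 0"
  and one_minus_lmonom_1_neq_0: "1 - lmonom 1 \<noteq> 0"
  by (metis fls_nth_lmonom fls_one_nth fls_plus_nth fls_zero_nth add.right_neutral one_neq_zero,
      metis fls_nth_lmonom fls_one_nth fls_minus_nth fls_zero_nth diff_zero zero_neq_one)

definition motzkin_step :: "int fls" where
  "motzkin_step = lmonom 1 + 1 + lmonom (-1)"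

lemma fls_nth_motzkin_step_times:
  "fls_nth (motzkin_step * f) n = fls_nth f (n - 1) + fls_nth f n + fls_nth f (n + 1)"
  by (simp add: motzkin_step_def distrib_right)

lemma fact_div_fact_fact_fact:
  assumes "a + b \<le> m"
  shows "fact m div (fact a * fact b * fact (m - a - b)) = (m choose (a + b)) * ((a + b) choose a)"
proof -
  have "(fact m :: nat) = fact (a + b) * fact (m - (a + b)) * (m choose (a + b))"
    using binomial_fact_lemma[OF assms] by simp
  also have "fact (a + b) = fact a * fact b * ((a + b) choose a)"
    using binomial_fact_lemma[of a "a + b"] by (simp add: ac_simps)
  finally have "(fact m :: nat) =
      ((m choose (a + b)) * ((a + b) choose a)) * (fact a * fact b * fact (m - a - b))"
    by (simp add: ac_simps)
  then show ?thesis
    by simp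
qed

lemma trinom_of_nat: "trinom m (int a) (int b) = int (m choose (a + b)) * int ((a + b) choose a)"
proof (cases "a + b \<le> m")
  case True
  then show ?thesis
    using fact_div_fact_fact_fact[OF True] by (simp add: trinom_def)
qed (simp add: trinom_def)

lemma trinom_eq_0:
  "a < 0 \<or> b < 0 \<or> int m < a \<Longrightarrow> trinom m a b = 0"
  by (auto simp: trinom_def)

lemma trinom_Suc: "trinom (Suc m) a b = trinom m (a - 1) b + trinom m a (b - 1) + trinom m a b"
proof (cases "a < 0 \<or> b < 0")
  case True
  then show ?thesis
    by (auto simp: trinom_eq_0)
next
  case False
  then obtain a' b' where ab: "a = int a'" "b = int b'"
    by (metis nonneg_int_cases not_less)
  show ?thesis
  proof (cases a'; cases b')
    assume "a' = 0" "b' = 0"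
    then show ?thesis
      using ab by (simp add: trinom_eq_0 trinom_def)
  next
    fix b'' assume "a' = 0" "b' = Suc b''"
    moreover have "trinom m (-1) b = 0"
      by (simp add: trinom_eq_0)
    ultimately show ?thesis
      using ab trinom_of_nat[of m 0 b''] trinom_of_nat[of m 0 "Suc b''"] trinom_of_nat[of "Suc m" 0 "Suc b''"]
      by simp
  next
    fix a'' assume "a' = Suc a''" "b' = 0"
    moreover have "trinom m a (-1) = 0"
      by (simp add: trinom_eq_0)
    ultimately show ?thesis
      using ab trinom_of_nat[of m a'' 0] trinom_of_nat[of m "Suc a''" 0] trinom_of_nat[of "Suc m" "Suc a''" 0]
      by simp
  next
    fix a'' b'' assume "a' = Suc a''" "b' = Suc b''"
    then show ?thesis
      using ab trinom_of_nat[of m a'' "Suc b''"] trinom_of_nat[of m "Suc a''" b'']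
        trinom_of_nat[of m "Suc a''" "Suc b''"] trinom_of_nat[of "Suc m" "Suc a''" "Suc b''"]
      by (simp add: algebra_simps)
  qed
qed

lemma fls_nth_motzkin_step_power:
  "fls_nth (motzkin_step ^ m) l = (\<Sum>a\<in>{0..m}. trinom m (int a) (int a + l))"
proof (induction m arbitrary: l)
  case 0
  then show ?case
    by (simp add: trinom_def)
next
  case (Suc m)
  have shift_down: "(\<Sum>a\<in>{0..Suc m}. trinom m (int a - 1) (int a + l)) =
      (\<Sum>a\<in>{0..m}. trinom m (int a) (int a + (l + 1)))"
    by (subst sum.atLeast0_atMost_Suc_shift) (simp add: trinom_eq_0 algebra_simps)
  have drop_last: "(\<Sum>a\<in>{0..Suc m}. trinom m (int a) (int a + l')) =
      (\<Sum>a\<in>{0..m}. trinom m (int a) (int a + l'))" for l'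
    by (subst sum.atLeast0_atMost_Suc) (simp add: trinom_def, arith)
  have "fls_nth (motzkin_step ^ Suc m) l =
      fls_nth (motzkin_step ^ m) (l - 1) + fls_nth (motzkin_step ^ m) l + fls_nth (motzkin_step ^ m) (l + 1)"
    by (simp add: fls_nth_motzkin_step_times)
  also have "\<dots> = (\<Sum>a\<in>{0..Suc m}. trinom m (int a - 1) (int a + l))
      + (\<Sum>a\<in>{0..Suc m}. trinom m (int a) (int a + (l - 1)))
      + (\<Sum>a\<in>{0..Suc m}. trinom m (int a) (int a + l))"
    unfolding Suc shift_down drop_last by (simp add: ac_simps)
  also have "\<dots> = (\<Sum>a\<in>{0..Suc m}. trinom (Suc m) (int a) (int a + l))"
    by (simp add: trinom_Suc sum.distrib algebra_simps)
  finally show ?case .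
qed

section \<open>Counting Motzkin prefixes by reflection\<close>

definition nonneg_paths :: "nat \<Rightarrow> int \<Rightarrow> int list set" where
  "nonneg_paths m h = {s. set s \<subseteq> {-1, 0, 1} \<and> length s = m \<and> (\<forall>j\<le>m. h + sum_list (take j s) \<ge> 0)}"

lemma MP_eq_card_nonneg_paths: "MP m k = card (nonneg_paths m (int k))"
  unfolding MP_def nonneg_paths_def by simp

lemma finite_nonneg_paths: "finite (nonneg_paths m h)"
proof (rule finite_subset)
  show "nonneg_paths m h \<subseteq> {s. set s \<subseteq> {-1, 0, 1} \<and> length s = m}"
    unfolding nonneg_paths_def by auto
qed (simp add: finite_lists_length_eq)

lemma nonneg_paths_neg: "h < 0 \<Longrightarrow> nonneg_paths m h = {}"
  unfolding nonneg_paths_def by force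

lemma nonneg_paths_0: "h \<ge> 0 \<Longrightarrow> nonneg_paths 0 h = {[]}"
  unfolding nonneg_paths_def by auto

lemma Cons_mem_nonneg_paths_iff:
  assumes "h \<ge> 0"
  shows "d # s \<in> nonneg_paths (Suc m) h \<longleftrightarrow> d \<in> {-1, 0, 1} \<and> s \<in> nonneg_paths m (h + d)"
proof -
  have "(\<forall>j\<le>Suc m. h + sum_list (take j (d # s)) \<ge> 0) \<longleftrightarrow>
      (\<forall>j\<le>m. (h + d) + sum_list (take j s) \<ge> 0)"
    unfolding less_Suc_eq_le[symmetric] All_less_Suc2 using assms by (simp add: add.assoc)
  then show ?thesis
    unfolding nonneg_paths_def by auto
qed

lemma nonneg_paths_Suc:
  assumes "h \<ge> 0"
  shows "nonneg_paths (Suc m) h =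
    (#) (-1) ` nonneg_paths m (h - 1) \<union> (#) 0 ` nonneg_paths m h \<union> (#) 1 ` nonneg_paths m (h + 1)"
proof (intro equalityI subsetI)
  fix s assume s: "s \<in> nonneg_paths (Suc m) h"
  then obtain d s' where "s = d # s'"
    unfolding nonneg_paths_def by (cases s) auto
  with s show "s \<in> (#) (-1) ` nonneg_paths m (h - 1) \<union> (#) 0 ` nonneg_paths m h \<union>
      (#) 1 ` nonneg_paths m (h + 1)"
    using Cons_mem_nonneg_paths_iff[OF assms] by auto
qed (use Cons_mem_nonneg_paths_iff[OF assms] in auto)

lemma card_nonneg_paths_Suc:
  assumes "h \<ge> 0"
  shows "card (nonneg_paths (Suc m) h) =
    card (nonneg_paths m (h - 1)) + card (nonneg_paths m h) + card (nonneg_paths m (h + 1))"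
  unfolding nonneg_paths_Suc[OF assms]
  by (subst card_Un_disjoint; auto simp: finite_nonneg_paths card_image card_Un_disjoint)+

text \<open>Reflection in the line \<open>-1\<close>: the paths from height \<open>h\<close> that stay weakly above \<open>0\<close>
  are counted by the constant term of \<open>(x + 1 + x\<^sup>-\<^sup>1)\<^sup>m\<close> times the window
  \<open>x\<^sup>-\<^sup>h\<^sup>-\<^sup>1 + \<dots> + x\<^sup>h\<close>, because the window satisfies the same recursion in \<open>h\<close>
  as the path counts and vanishes at \<open>h = -1\<close>.\<close>
definition window :: "int \<Rightarrow> int fls" where
  "window h = (\<Sum>u\<in>{-h-1..h}. lmonom u)"

lemma fls_nth_window: "fls_nth (window h) n = (if -h - 1 \<le> n \<and> n \<le> h then 1 else 0)"
  by (simp add: window_def fls_nth_sum)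

lemma window_neg1: "window (-1) = 0"
  by (simp add: window_def)

lemma motzkin_step_times_window:
  "h \<ge> 0 \<Longrightarrow> motzkin_step * window h = window (h + 1) + window h + window (h - 1)"
  by (rule fls_eqI) (simp add: fls_nth_motzkin_step_times fls_nth_window)

lemma one_minus_lmonom_1_times_window:
  "h \<ge> -1 \<Longrightarrow> (1 - lmonom 1) * window h = lmonom (-h - 1) - lmonom (h + 1)"
  by (rule fls_eqI) (auto simp: left_diff_distrib fls_nth_window)

lemma card_nonneg_paths_eq_const_term:
  "h \<ge> -1 \<Longrightarrow> int (card (nonneg_paths m h)) = fls_nth (motzkin_step ^ m * window h) 0"
proof (induction m arbitrary: h)
  case 0
  then show ?case
    by (cases "h = -1") (auto simp: nonneg_paths_neg window_neg1 nonneg_paths_0 fls_nth_window)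
next
  case (Suc m)
  show ?case
  proof (cases "h = -1")
    case True
    then show ?thesis
      by (simp add: nonneg_paths_neg window_neg1)
  next
    case False
    with Suc.prems have h: "h \<ge> 0"
      by simp
    have "fls_nth (motzkin_step ^ Suc m * window h) 0 = fls_nth (motzkin_step ^ m * (motzkin_step * window h)) 0"
      by (simp add: ac_simps)
    also have "\<dots> = int (card (nonneg_paths (Suc m) h))"
      using Suc.IH[of "h + 1"] Suc.IH[of h] Suc.IH[of "h - 1"] h
      by (simp add: motzkin_step_times_window distrib_left card_nonneg_paths_Suc)
    finally show ?thesis
      by simp
  qed
qed

lemma const_term_times_window:
  "h \<ge> 0 \<Longrightarrow> fls_nth (f * window h) 0 = (\<Sum>l\<in>{-h..h + 1}. fls_nth f l)"
proof -
  assume "h \<ge> 0"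
  have "fls_nth (f * window h) 0 = (\<Sum>u\<in>{-h-1..h}. fls_nth f (- u))"
    by (simp add: window_def sum_distrib_left fls_nth_sum)
  also have "\<dots> = (\<Sum>l\<in>{-h..h + 1}. fls_nth f l)"
    by (rule sum.reindex_bij_witness[of _ uminus uminus]) auto
  finally show ?thesis .
qed

lemma MP_eq_const_term: "int (MP m k) = fls_nth (motzkin_step ^ m * window (int k)) 0"
  using card_nonneg_paths_eq_const_term[of "int k" m] by (simp add: MP_eq_card_nonneg_paths)

lemma trinom_sum_eq_const_term:
  "(\<Sum>a\<in>{0..m}. \<Sum>l\<in>{- int k..int k + 1}. trinom m (int a) (int a + l)) =
    fls_nth (motzkin_step ^ m * window (int k)) 0"
  by (simp add: const_term_times_window fls_nth_motzkin_step_power sum.swap[of _ "{0..m}"])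

section \<open>Hankel determinants of a linear functional\<close>

lemma det_unit_lower_triangular:
  fixes A :: "'a::comm_ring_1 mat"
  assumes "A \<in> carrier_mat n n"
    and "\<And>i j. i < j \<Longrightarrow> j < n \<Longrightarrow> A $$ (i, j) = 0" "\<And>i. i < n \<Longrightarrow> A $$ (i, i) = 1"
  shows "det A = 1"
proof -
  have "det A = prod_list (diag_mat A)"
    by (rule det_lower_triangular[OF _ assms(1)]) (use assms(2) in auto)
  also have "diag_mat A = replicate n 1"
    using assms(1,3) by (intro nth_equalityI) (auto simp: diag_mat_def)
  finally show ?thesis
    by simp
qed

lemma sum_monom_coeff_lessThan: "degree p < n \<Longrightarrow> (\<Sum>a<n. monom (coeff p a) a) = p"
  by (intro poly_eqI) (auto simp: coeff_sum coeff_eq_0)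

definition monic_of_degree :: "nat \<Rightarrow> 'a::zero_neq_one poly \<Rightarrow> bool" where
  "monic_of_degree i p \<longleftrightarrow> degree p \<le> i \<and> coeff p i = 1"

lemma det_coeff_mat_monic:
  assumes "\<And>i. i < n \<Longrightarrow> monic_of_degree i (P i)"
  shows "det (mat n n (\<lambda>(i, a). coeff (P i) a)) = (1 :: 'a::comm_ring_1)"
proof (rule det_unit_lower_triangular)
  fix i j assume "i < j" "j < n"
  with assms[of i] show "mat n n (\<lambda>(i, a). coeff (P i) a) $$ (i, j) = 0"
    by (simp add: monic_of_degree_def coeff_eq_0)
qed (use assms in \<open>auto simp: monic_of_degree_def\<close>)

lemma mat_functional_factorization:
  fixes L :: "'a::comm_ring_1 poly \<Rightarrow> 'a" and P Q :: "nat \<Rightarrow> 'a poly"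
  assumes L_add: "\<And>p q. L (p + q) = L p + L q"
    and L_smult: "\<And>c p. L (smult c p) = c * L p"
    and deg: "\<And>i. i < n \<Longrightarrow> degree (P i) < n" "\<And>j. j < n \<Longrightarrow> degree (Q j) < n"
  shows "mat n n (\<lambda>(i, j). L (P i * Q j)) =
    mat n n (\<lambda>(i, a). coeff (P i) a) * mat n n (\<lambda>(a, b). L (monom 1 (a + b))) *
      transpose_mat (mat n n (\<lambda>(j, b). coeff (Q j) b))"
    (is "_ = ?CP * ?H * transpose_mat ?CQ")
proof (rule eq_matI)
  have L_sum: "L (sum f A) = (\<Sum>x\<in>A. L (f x))" if "finite A" for f :: "'b \<Rightarrow> 'a poly" and A
    using that by (induction A rule: finite_induct) (auto simp: L_add L_smult[of 0 0, simplified])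
  fix i j assume "i < dim_row (?CP * ?H * transpose_mat ?CQ)" "j < dim_col (?CP * ?H * transpose_mat ?CQ)"
  then have i: "i < n" and j: "j < n"
    by auto
  have "P i * Q j = (\<Sum>a<n. monom (coeff (P i) a) a) * (\<Sum>b<n. monom (coeff (Q j) b) b)"
    using deg i j by (simp add: sum_monom_coeff_lessThan)
  also have "\<dots> = (\<Sum>a<n. \<Sum>b<n. smult (coeff (P i) a * coeff (Q j) b) (monom 1 (a + b)))"
    by (simp add: sum_distrib_left sum_distrib_right mult_monom smult_monom mult.commute)
      (rule sum.swap)
  finally have "L (P i * Q j) = (\<Sum>a<n. \<Sum>b<n. coeff (P i) a * coeff (Q j) b * L (monom 1 (a + b)))"
    by (simp add: L_sum L_smult)
  also have "\<dots> = (?CP * ?H * transpose_mat ?CQ) $$ (i, j)"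
    using i j by (simp add: scalar_prod_def sum_distrib_left sum_distrib_right atLeast0LessThan algebra_simps)
      (subst sum.swap, simp add: algebra_simps)
  finally show "mat n n (\<lambda>(i, j). L (P i * Q j)) $$ (i, j) = (?CP * ?H * transpose_mat ?CQ) $$ (i, j)"
    using i j by simp
qed auto

lemma det_hankel_change_of_basis:
  fixes L :: "'a::comm_ring_1 poly \<Rightarrow> 'a" and P Q :: "nat \<Rightarrow> 'a poly"
  assumes "\<And>p q. L (p + q) = L p + L q" "\<And>c p. L (smult c p) = c * L p"
    and P: "\<And>i. i < n \<Longrightarrow> monic_of_degree i (P i)"
    and Q: "\<And>j. j < n \<Longrightarrow> monic_of_degree j (Q j)"
  shows "det (mat n n (\<lambda>(i, j). L (P i * Q j))) = det (mat n n (\<lambda>(i, j). L (monom 1 (i + j))))"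
proof -
  have "degree (P i) < n" "degree (Q i) < n" if "i < n" for i
    using P[OF that] Q[OF that] that by (auto simp: monic_of_degree_def)
  then have "det (mat n n (\<lambda>(i, j). L (P i * Q j))) = det (
      mat n n (\<lambda>(i, a). coeff (P i) a) * mat n n (\<lambda>(i, j). L (monom 1 (i + j))) *
        transpose_mat (mat n n (\<lambda>(j, b). coeff (Q j) b)))"
    using assms(1,2) by (subst mat_functional_factorization) auto
  also have "\<dots> = det (mat n n (\<lambda>(i, a). coeff (P i) a)) * det (mat n n (\<lambda>(i, j). L (monom 1 (i + j)))) *
      det (mat n n (\<lambda>(j, b). coeff (Q j) b))"
    by (simp add: det_mult[of _ n] det_transpose[of _ n] mult_carrier_mat[of _ n n])
  finally show ?thesis
    by (simp add: det_coeff_mat_monic P Q)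
qed

definition eval_step :: "int poly \<Rightarrow> int fls" where
  "eval_step p = poly (of_int_poly p) motzkin_step"

lemma eval_step_add: "eval_step (p + q) = eval_step p + eval_step q"
  and eval_step_diff: "eval_step (p - q) = eval_step p - eval_step q"
  and eval_step_mult: "eval_step (p * q) = eval_step p * eval_step q"
  and eval_step_smult: "eval_step (smult c p) = of_int c * eval_step p"
  and eval_step_pCons: "eval_step (pCons c p) = of_int c + motzkin_step * eval_step p"
  and eval_step_monom: "eval_step (monom 1 m) = motzkin_step ^ m"
  and eval_step_1: "eval_step 1 = 1"
  by (simp_all add: eval_step_def of_int_poly_hom.hom_add of_int_poly_hom.hom_minus
      of_int_poly_hom.hom_mult of_int_hom.map_poly_hom_smult of_int_hom.map_poly_pCons_hom
      poly_monom)

lemma eval_step_linear: "eval_step [:c, 1:] = of_int c + motzkin_step"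
  by (simp add: eval_step_pCons eval_step_def)

lemma fls_nth_eval_step_uminus: "fls_nth (eval_step p) (- n) = fls_nth (eval_step p) n"
proof (induction p arbitrary: n rule: pCons_induct)
  case 0
  then show ?case
    by (simp add: eval_step_def)
next
  case (pCons c p)
  have reflect: "a = - b \<Longrightarrow> fls_nth (eval_step p) a = fls_nth (eval_step p) b" for a b
    using pCons.IH by blast
  show ?case
    using reflect[of "- n - 1" "n + 1"] reflect[of "- n" n] reflect[of "- n + 1" "n - 1"]
    by (simp add: eval_step_pCons fls_nth_motzkin_step_times fls_of_int_nth)
qed

definition moment :: "nat \<Rightarrow> int poly \<Rightarrow> int" where
  "moment k p = fls_nth (eval_step p * window (int k)) 0"

lemma moment_add: "moment k (p + q) = moment k p + moment k q"
  by (simp add: moment_def eval_step_add distrib_right)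

lemma moment_0: "moment k 0 = 0"
  by (simp add: moment_def eval_step_def)

lemma moment_smult: "moment k (smult c p) = c * moment k p"
  by (simp add: moment_def eval_step_smult mult.assoc)

lemma moment_monom: "moment k (monom 1 m) = fls_nth (motzkin_step ^ m * window (int k)) 0"
  by (simp add: moment_def eval_step_monom)

text \<open>As \<open>eval_step p\<close> is symmetric under \<open>x \<mapsto> x\<^sup>-\<^sup>1\<close>, the functional does not
  change when the window is shifted by one to \<open>x\<^sup>-\<^sup>k + \<dots> + x\<^sup>k\<^sup>+\<^sup>1\<close>.\<close>
lemma twice_moment:
  "2 * moment k p = fls_nth (eval_step p * (1 + lmonom 1) * window (int k)) 0"
proof -
  let ?f = "eval_step p" and ?w = "window (int k)"
  have "?f * ?w - ?f * lmonom 1 * ?w = ?f * ((1 - lmonom 1) * ?w)"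
    by (simp add: algebra_simps)
  also have "\<dots> = ?f * lmonom (- int k - 1) - ?f * lmonom (int k + 1)"
    by (simp add: one_minus_lmonom_1_times_window right_diff_distrib)
  finally have "fls_nth (?f * ?w - ?f * lmonom 1 * ?w) 0 = fls_nth ?f (int k + 1) - fls_nth ?f (- (int k + 1))"
    by (simp only: fls_minus_nth fls_nth_times_lmonom) (simp add: add.commute)
  then show ?thesis
    using fls_nth_eval_step_uminus[of p "int k + 1"] by (simp add: moment_def distrib_left distrib_right)
qed

section \<open>Chebyshev polynomials of the third and fourth kind\<close>

text \<open>At \<open>z = x + 1 + x\<^sup>-\<^sup>1\<close>, \<open>cheb_V i\<close> and \<open>cheb_W i\<close> are the Chebyshev polynomials
  \<open>V\<^sub>i\<close> and \<open>W\<^sub>i\<close> evaluated at \<open>(z - 1)/2\<close>.\<close>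
fun cheb_V :: "nat \<Rightarrow> int poly" where
  "cheb_V 0 = 1"
| "cheb_V (Suc 0) = [:-2, 1:]"
| "cheb_V (Suc (Suc i)) = [:-1, 1:] * cheb_V (Suc i) - cheb_V i"

fun cheb_W :: "nat \<Rightarrow> int poly" where
  "cheb_W 0 = 1"
| "cheb_W (Suc 0) = [:0, 1:]"
| "cheb_W (Suc (Suc i)) = [:-1, 1:] * cheb_W (Suc i) - cheb_W i"

lemma eval_step_cheb_V: "(1 + lmonom 1) * eval_step (cheb_V i) = lmonom (int i + 1) + lmonom (- int i)"
proof (induction i rule: cheb_V.induct)
  case (3 i)
  have "(1 + lmonom 1) * eval_step (cheb_V (Suc (Suc i))) =
      (lmonom 1 + lmonom (-1)) * ((1 + lmonom 1) * eval_step (cheb_V (Suc i))) - (1 + lmonom 1) * eval_step (cheb_V i)"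
    by (simp only: cheb_V.simps eval_step_diff eval_step_mult eval_step_linear motzkin_step_def)
      (simp add: algebra_simps)
  also have "\<dots> = (lmonom 1 + lmonom (-1)) * (lmonom (int (Suc i) + 1) + lmonom (- int (Suc i))) - (lmonom (int i + 1) + lmonom (- int i))"
    by (simp only: 3)
  also have "\<dots> = lmonom (int (Suc (Suc i)) + 1) + lmonom (- int (Suc (Suc i)))"
    by (intro fls_eqI) (auto simp: algebra_simps)
  finally show ?case .
qed (simp_all add: eval_step_1 eval_step_linear motzkin_step_def algebra_simps)

lemma eval_step_cheb_W: "(1 - lmonom 1) * eval_step (cheb_W i) = lmonom (- int i) - lmonom (int i + 1)"
proof (induction i rule: cheb_W.induct)
  case (3 i)
  have "(1 - lmonom 1) * eval_step (cheb_W (Suc (Suc i))) =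
      (lmonom 1 + lmonom (-1)) * ((1 - lmonom 1) * eval_step (cheb_W (Suc i))) - (1 - lmonom 1) * eval_step (cheb_W i)"
    by (simp only: cheb_W.simps eval_step_diff eval_step_mult eval_step_linear motzkin_step_def)
      (simp add: algebra_simps)
  also have "\<dots> = (lmonom 1 + lmonom (-1)) * (lmonom (- int (Suc i)) - lmonom (int (Suc i) + 1)) - (lmonom (- int i) - lmonom (int i + 1))"
    by (simp only: 3)
  also have "\<dots> = lmonom (- int (Suc (Suc i))) - lmonom (int (Suc (Suc i)) + 1)"
    by (intro fls_eqI) (auto simp: algebra_simps)
  finally show ?case .
qed (simp_all add: eval_step_1 eval_step_linear motzkin_step_def algebra_simps)

lemma monic_of_degree_linear_times_minus:
  fixes p s :: "int poly"
  assumes "monic_of_degree d p" "degree s \<le> d"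
  shows "monic_of_degree (Suc d) ([:c, 1:] * p - s)"
proof -
  have linear_times: "[:c, 1:] * p = smult c p + pCons 0 p"
    by simp
  have "degree (smult c p + pCons 0 p) \<le> Suc d"
    using assms(1) degree_smult_le[of c p] unfolding monic_of_degree_def
    by (intro degree_add_le) auto
  with assms show ?thesis
    unfolding monic_of_degree_def linear_times
    by (auto simp: coeff_eq_0 intro: degree_diff_le)
qed

lemma monic_of_degree_cheb_V: "monic_of_degree i (cheb_V i)"
proof (induction i rule: cheb_V.induct)
  case (3 i)
  then show ?case
    using monic_of_degree_linear_times_minus[of "Suc i" "cheb_V (Suc i)" "cheb_V i" "-1"]
    by (simp add: monic_of_degree_def)
qed (auto simp: monic_of_degree_def)

lemma monic_of_degree_cheb_W: "monic_of_degree i (cheb_W i)"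
proof (induction i rule: cheb_W.induct)
  case (3 i)
  then show ?case
    using monic_of_degree_linear_times_minus[of "Suc i" "cheb_W (Suc i)" "cheb_W i" "-1"]
    by (simp add: monic_of_degree_def)
qed (auto simp: monic_of_degree_def)

lemma moment_cheb_V: "moment k (cheb_V i) = (if i \<le> k then 1 else 0)"
proof -
  have "2 * moment k (cheb_V i) = fls_nth ((lmonom (int i + 1) + lmonom (- int i)) * window (int k)) 0"
    unfolding twice_moment eval_step_cheb_V[symmetric] by (simp only: ac_simps)
  also have "\<dots> = 2 * (if i \<le> k then 1 else 0)"
    by (simp add: distrib_right fls_nth_window)
  finally show ?thesis
    by simp
qed

text \<open>The factor \<open>z - 3\<close> is chosen because \<open>x (x + 1 + x\<^sup>-\<^sup>1 - 3) = (1 - x)\<^sup>2\<close>, which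
  cancels against the denominators of \<open>eval_step_cheb_W\<close> and \<open>one_minus_lmonom_1_times_window\<close>.\<close>
lemma moment_cheb_V_times_cheb_W:
  "moment k (cheb_V i * ([:-3, 1:] * cheb_W j)) =
    (if i = Suc j + k then 1 else 0) - (if Suc j = i + k + 2 then 1 else 0) - (if i + Suc j = k + 1 then 1 else 0)"
proof -
  define G where "G = eval_step (cheb_V i * ([:-3, 1:] * cheb_W j)) * (1 + lmonom 1) * window (int k)"
  define V where "V = lmonom (int i + 1) + lmonom (- int i)"
  define W where "W = lmonom (- int j) - lmonom (int j + 1)"
  define R where "R = lmonom (- int k - 1) - lmonom (int k + 1)"
  have "G * lmonom 1 * ((1 + lmonom 1) * (1 - lmonom 1)) =
      ((1 + lmonom 1) * eval_step (cheb_V i)) * (lmonom 1 * eval_step [:-3, 1:])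
        * ((1 - lmonom 1) * eval_step (cheb_W j)) * (1 + lmonom 1) * window (int k)"
    by (simp only: G_def eval_step_mult mult_ac)
  also have "lmonom 1 * eval_step [:-3, 1:] = (1 - lmonom 1)\<^sup>2"
    by (simp add: eval_step_linear motzkin_step_def algebra_simps power2_eq_square)
  also have "((1 + lmonom 1) * eval_step (cheb_V i)) * (1 - lmonom 1)\<^sup>2 * ((1 - lmonom 1) * eval_step (cheb_W j))
        * (1 + lmonom 1) * window (int k) = V * W * ((1 - lmonom 1) * window (int k)) * ((1 + lmonom 1) * (1 - lmonom 1))"
    unfolding eval_step_cheb_V eval_step_cheb_W V_def W_def by (simp only: ac_simps power2_eq_square)
  also have "(1 - lmonom 1) * window (int k) = R"
    by (simp add: R_def one_minus_lmonom_1_times_window)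
  finally have "G * lmonom 1 = V * W * R"
    using one_plus_lmonom_1_neq_0 one_minus_lmonom_1_neq_0 by simp
  then have "fls_nth G 0 = fls_nth (V * W * R) 1"
    by (metis diff_self fls_nth_times_lmonom)
  also have "\<dots> = 2 * ((if i = Suc j + k then 1 else 0) - (if Suc j = i + k + 2 then 1 else 0)
      - (if i + Suc j = k + 1 then 1 else 0))"
    unfolding V_def W_def R_def
    by (simp add: distrib_left distrib_right left_diff_distrib right_diff_distrib)
  finally show ?thesis
    using twice_moment[of k "cheb_V i * ([:-3, 1:] * cheb_W j)"] by (simp add: G_def)
qed

section \<open>Reduction of the Hankel matrix\<close>

text \<open>The representative in \<open>{0..k}\<close> of \<open>v\<close> under the reflections \<open>v \<mapsto> 2k + 1 - v\<close>
  and the translations by \<open>2k + 2\<close>.\<close>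
definition fold_residue :: "nat \<Rightarrow> nat \<Rightarrow> nat" where
  "fold_residue k v =
    (if v mod (2 * k + 2) \<le> k then v mod (2 * k + 2) else 2 * k + 1 - v mod (2 * k + 2))"

lemma fold_residue_le: "fold_residue k v \<le> k"
  using mod_less_divisor[of "2 * k + 2" v] by (auto simp: fold_residue_def)

lemma fold_residue_add_period: "fold_residue k (v + (2 * k + 2)) = fold_residue k v"
  by (simp only: fold_residue_def mod_add_self2)

lemma fold_residue_reflect: "k + 1 \<le> v \<Longrightarrow> v \<le> 2 * k + 1 \<Longrightarrow> fold_residue k v = 2 * k + 1 - v"
  by (simp add: fold_residue_def)

lemma fold_residue_shift:
  assumes "2 * k + 2 \<le> v" "v \<le> 3 * k + 2"
  shows "fold_residue k v = v - (2 * k + 2)"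
proof -
  have "v mod (2 * k + 2) = (v - (2 * k + 2)) mod (2 * k + 2)"
    using assms(1) by (rule le_mod_geq)
  also have "\<dots> = v - (2 * k + 2)"
    using assms by (intro mod_less) linarith
  finally show ?thesis
    using assms by (simp add: fold_residue_def)
qed

text \<open>The correction term cancels the entry \<open>i + k + 2 = j\<close> of the moment of
  \<open>cheb_V i * ([:-3, 1:] * cheb_W (j - 1))\<close>, so that every column of the reduced matrix has at
  most two nonzero entries.\<close>
fun hankel_col :: "nat \<Rightarrow> nat \<Rightarrow> int poly" where
  "hankel_col k j =
    (if j = 0 then 1
     else [:-3, 1:] * cheb_W (j - 1) + (if 2 * k + 2 < j then hankel_col k (j - (2 * k + 2)) else 0))"

declare hankel_col.simps [simp del]

definition reduced_entry :: "nat \<Rightarrow> nat \<Rightarrow> nat \<Rightarrow> int" where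
  "reduced_entry k i j =
    (if j = 0 then (if i \<le> k then 1 else 0)
     else (if i = j + k then 1 else 0) - (if i = fold_residue k (j + k) then 1 else 0))"

lemma moment_cheb_V_times_hankel_col: "moment k (cheb_V i * hankel_col k j) = reduced_entry k i j"
proof (induction j rule: less_induct)
  case (less j)
  show ?case
  proof (cases j)
    case 0
    then show ?thesis
      by (simp add: hankel_col.simps reduced_entry_def moment_cheb_V)
  next
    case (Suc j')
    have unfold: "moment k (cheb_V i * hankel_col k j) = moment k (cheb_V i * ([:-3, 1:] * cheb_W j'))
        + (if 2 * k + 2 < j then moment k (cheb_V i * hankel_col k (j - (2 * k + 2))) else 0)"
      using Suc by (subst hankel_col.simps) (simp add: distrib_left moment_add moment_0 del: mult_pCons_left)
    consider "j \<le> k + 1" | "k + 1 < j" "j \<le> 2 * k + 2" | "2 * k + 2 < j"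
      by linarith
    then show ?thesis
    proof cases
      case 1
      then have "fold_residue k (j + k) = k + 1 - j"
        using Suc by (subst fold_residue_reflect) auto
      with 1 Suc show ?thesis
        unfolding unfold moment_cheb_V_times_cheb_W by (auto simp: reduced_entry_def)
    next
      case 2
      then have "fold_residue k (j + k) = j - k - 2"
        by (subst fold_residue_shift) auto
      with 2 Suc show ?thesis
        unfolding unfold moment_cheb_V_times_cheb_W by (auto simp: reduced_entry_def)
    next
      case 3
      have "j + k = (j - (2 * k + 2) + k) + (2 * k + 2)"
        using 3 by simp
      then have "fold_residue k (j + k) = fold_residue k (j - (2 * k + 2) + k)"
        by (metis fold_residue_add_period)
      with 3 Suc less[of "j - (2 * k + 2)"] show ?thesis
        unfolding unfold moment_cheb_V_times_cheb_W by (auto simp: reduced_entry_def)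
    qed
  qed
qed

lemma monic_of_degree_hankel_col: "monic_of_degree j (hankel_col k j)"
proof (induction j rule: less_induct)
  case (less j)
  show ?case
  proof (cases j)
    case 0
    then show ?thesis
      by (simp add: hankel_col.simps monic_of_degree_def)
  next
    case (Suc j')
    define R where "R = (if 2 * k + 2 < j then hankel_col k (j - (2 * k + 2)) else 0)"
    have "degree R < j"
    proof (cases "2 * k + 2 < j")
      case True
      then have "degree R \<le> j - (2 * k + 2)"
        using less[of "j - (2 * k + 2)"] by (simp add: R_def monic_of_degree_def)
      with True show ?thesis
        by linarith
    qed (use Suc in \<open>simp add: R_def\<close>)
    moreover have "monic_of_degree j ([:-3, 1:] * cheb_W j' - 0)"
      unfolding Suc by (intro monic_of_degree_linear_times_minus monic_of_degree_cheb_W) simp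
    moreover have "hankel_col k j = [:-3, 1:] * cheb_W j' + R"
      using Suc by (subst hankel_col.simps) (simp add: R_def)
    ultimately show ?thesis
      by (auto simp: monic_of_degree_def coeff_eq_0 intro: degree_add_le)
  qed
qed

lemma det_hankel_eq_det_reduced:
  "det (mat n n (\<lambda>(i, j). fls_nth (motzkin_step ^ (i + j) * window (int k)) 0)) =
    det (mat n n (\<lambda>(i, j). reduced_entry k i j))"
proof -
  have "det (mat n n (\<lambda>(i, j). moment k (cheb_V i * hankel_col k j))) =
      det (mat n n (\<lambda>(i, j). moment k (monom 1 (i + j))))"
    by (rule det_hankel_change_of_basis)
      (auto simp: moment_add moment_smult monic_of_degree_cheb_V monic_of_degree_hankel_col)
  then show ?thesis
    by (simp add: moment_cheb_V_times_hankel_col moment_monom)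
qed

section \<open>The determinant of the reduced matrix\<close>

lemma det_expand_row_single_entry:
  fixes A :: "'a::comm_ring_1 mat"
  assumes A: "A \<in> carrier_mat (Suc p) (Suc p)" and r: "r < Suc p"
    and zero: "\<And>j. 0 < j \<Longrightarrow> j < Suc p \<Longrightarrow> A $$ (r, j) = 0"
  shows "det A = (-1) ^ r * A $$ (r, 0) * det (mat_delete A r 0)"
proof -
  have "det A = (\<Sum>j<Suc p. A $$ (r, j) * cofactor A r j)"
    by (rule laplace_expansion_row[OF A r])
  also have "\<dots> = A $$ (r, 0) * cofactor A r 0"
    by (subst sum.lessThan_Suc_shift) (simp add: zero)
  finally show ?thesis
    by (simp add: cofactor_def)
qed

lemma det_scalar_diagonal: "det (mat p p (\<lambda>(i, j). if i = j then c else 0)) = (c :: 'a::comm_ring_1) ^ p"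
proof -
  have "mat p p (\<lambda>(i, j). if i = j then c else 0) = c \<cdot>\<^sub>m 1\<^sub>m p"
    by (rule eq_matI) auto
  then show ?thesis
    by simp
qed

lemma det_scalar_anti_diagonal:
  "det (mat p p (\<lambda>(i, j). if i + j + 1 = p then c else 0)) = (c :: 'a::comm_ring_1) ^ p * (-1) ^ (p choose 2)"
proof (induction p)
  case 0
  then show ?case
    by (simp add: binomial_eq_0)
next
  case (Suc p)
  let ?A = "mat (Suc p) (Suc p) (\<lambda>(i, j). if i + j + 1 = Suc p then c else 0)"
  have "det ?A = (-1) ^ p * ?A $$ (p, 0) * det (mat_delete ?A p 0)"
    by (rule det_expand_row_single_entry) auto
  also have "mat_delete ?A p 0 = mat p p (\<lambda>(i, j). if i + j + 1 = p then c else 0)"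
    by (rule eq_matI) (auto simp: mat_delete_def)
  finally show ?case
    using Suc by (simp add: numeral_2_eq_2 power_add algebra_simps)
qed

text \<open>The first and the last \<open>k\<close> columns of the reduced matrix, restricted to the rows
  \<open>0..k\<close>; all other entries of these columns vanish.\<close>
definition corner_mat :: "nat \<Rightarrow> nat \<Rightarrow> int mat" where
  "corner_mat k n = mat (Suc k) (Suc k)
    (\<lambda>(i, c). if c = 0 then 1 else - (if i = fold_residue k (n + (c - 1)) then 1 else 0))"

lemma corner_mat_carrier: "corner_mat k n \<in> carrier_mat (Suc k) (Suc k)"
  by (simp add: corner_mat_def)

lemma fold_residue_add_mod:
  "n mod (2 * k + 2) = \<rho> \<Longrightarrow> fold_residue k (n + c) = fold_residue k (\<rho> + c)"
  unfolding fold_residue_def by (metis mod_add_left_eq)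

lemma det_corner_mat_row_0:
  assumes "\<And>c. c < k \<Longrightarrow> fold_residue k (n + c) \<noteq> 0"
  shows "det (corner_mat k n) = det (mat_delete (corner_mat k n) 0 0)"
proof -
  have "det (corner_mat k n) = (-1) ^ 0 * corner_mat k n $$ (0, 0) * det (mat_delete (corner_mat k n) 0 0)"
    by (rule det_expand_row_single_entry[OF corner_mat_carrier])
      (use assms in \<open>auto simp: corner_mat_def gr0_conv_Suc\<close>)
  then show ?thesis
    by (simp add: corner_mat_def)
qed

lemma det_corner_mat_row_k:
  assumes "\<And>c. c < k \<Longrightarrow> k \<noteq> fold_residue k (n + c)"
  shows "det (corner_mat k n) = (-1) ^ k * det (mat_delete (corner_mat k n) k 0)"
proof -
  have "det (corner_mat k n) = (-1) ^ k * corner_mat k n $$ (k, 0) * det (mat_delete (corner_mat k n) k 0)"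
    by (rule det_expand_row_single_entry[OF corner_mat_carrier])
      (use assms in \<open>auto simp: corner_mat_def gr0_conv_Suc\<close>)
  then show ?thesis
    by (simp add: corner_mat_def)
qed

lemma det_corner_mat_residue_0: "n mod (2 * k + 2) = 0 \<Longrightarrow> det (corner_mat k n) = 1"
proof -
  assume n: "n mod (2 * k + 2) = 0"
  then have fold: "c < k \<Longrightarrow> fold_residue k (n + c) = c" for c
    using fold_residue_add_mod[OF n, of c] by (simp add: fold_residue_def)
  have "mat_delete (corner_mat k n) k 0 = mat k k (\<lambda>(i, j). if i = j then -1 else 0)"
    by (rule eq_matI) (auto simp: corner_mat_def mat_delete_def fold)
  then show ?thesis
    using det_corner_mat_row_k[of k n] fold by (simp add: det_scalar_diagonal flip: power_mult_distrib)
qed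

lemma det_corner_mat_residue_1: "n mod (2 * k + 2) = 1 \<Longrightarrow> det (corner_mat k n) = (-1) ^ k"
proof -
  assume n: "n mod (2 * k + 2) = 1"
  then have fold: "c < k \<Longrightarrow> fold_residue k (n + c) = c + 1" for c
    using fold_residue_add_mod[OF n, of c] by (simp add: fold_residue_def)
  have "mat_delete (corner_mat k n) 0 0 = mat k k (\<lambda>(i, j). if i = j then -1 else 0)"
    by (rule eq_matI) (auto simp: corner_mat_def mat_delete_def fold)
  then show ?thesis
    using det_corner_mat_row_0[of k n] fold by (simp add: det_scalar_diagonal)
qed

lemma det_corner_mat_residue_Suc_k:
  "n mod (2 * k + 2) = k + 1 \<Longrightarrow> det (corner_mat k n) = (-1) ^ (Suc k choose 2)"
proof -
  assume n: "n mod (2 * k + 2) = k + 1"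
  then have fold: "c < k \<Longrightarrow> fold_residue k (n + c) = k - c" for c
    using fold_residue_add_mod[OF n, of c] by (simp add: fold_residue_def)
  have "mat_delete (corner_mat k n) 0 0 = mat k k (\<lambda>(i, j). if i + j + 1 = k then -1 else 0)"
    by (rule eq_matI) (auto simp: corner_mat_def mat_delete_def fold)
  then show ?thesis
    using det_corner_mat_row_0[of k n] fold det_scalar_anti_diagonal[of k "-1 :: int"]
    by (simp add: numeral_2_eq_2 power_add)
qed

lemma det_corner_mat_residue_Suc_Suc_k:
  "n mod (2 * k + 2) = k + 2 \<Longrightarrow> det (corner_mat k n) = (-1) ^ (k choose 2)"
proof -
  assume n: "n mod (2 * k + 2) = k + 2"
  then have fold: "c < k \<Longrightarrow> fold_residue k (n + c) = k - 1 - c" for c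
    using fold_residue_add_mod[OF n, of c] by (simp add: fold_residue_def)
  have "mat_delete (corner_mat k n) k 0 = mat k k (\<lambda>(i, j). if i + j + 1 = k then -1 else 0)"
    by (rule eq_matI) (auto simp: corner_mat_def mat_delete_def fold)
  then show ?thesis
    using det_corner_mat_row_k[of k n] fold det_scalar_anti_diagonal[of k "-1 :: int"]
    by (simp flip: power_mult_distrib)
qed

lemma mod_double_modulus: "(n :: nat) mod (2 * k + 2) = (k + 1) * (n div (k + 1) mod 2) + n mod (k + 1)"
  using mod_mult2_eq[of n "k + 1" 2] by (simp add: algebra_simps)

lemma fold_residue_Suc_eq:
  assumes "v mod (k + 1) = k"
  shows "fold_residue k (Suc v) = fold_residue k v"
proof -
  have "v mod (2 * k + 2) = k \<or> v mod (2 * k + 2) = 2 * k + 1"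
    using mod_double_modulus[of v k] assms by (cases "even (v div (k + 1))") (auto simp: odd_iff_mod_2_eq_one)
  then show ?thesis
    by (auto simp: fold_residue_def mod_Suc)
qed

lemma det_corner_mat_eq_0:
  assumes "n mod (k + 1) \<noteq> 0" "n mod (k + 1) \<noteq> 1"
  shows "det (corner_mat k n) = 0"
proof -
  have r: "2 \<le> n mod (k + 1)" "n mod (k + 1) \<le> k"
    using assms mod_less_divisor[of "k + 1" n] by linarith+
  define c where "c = k - n mod (k + 1)"
  have c: "Suc c < k"
    unfolding c_def using r by linarith
  have "(n + c) mod (k + 1) = (n mod (k + 1) + c) mod (k + 1)"
    by (simp add: mod_add_left_eq)
  then have "(n + c) mod (k + 1) = k"
    using r by (simp add: c_def)
  then have "fold_residue k (n + c) = fold_residue k (n + Suc c)"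
    using fold_residue_Suc_eq by simp
  then have "col (corner_mat k n) (Suc c) = col (corner_mat k n) (Suc (Suc c))"
    using c by (intro eq_vecI) (auto simp: corner_mat_def)
  then show ?thesis
    using c by (intro det_identical_columns[OF corner_mat_carrier, of "Suc c" "Suc (Suc c)"]) auto
qed

lemma det_corner_mat:
  assumes "n mod (k + 1) \<le> 1"
  shows "det (corner_mat k n) = (-1) ^ (n mod (k + 1) * k) * (-1) ^ (n div (k + 1) * (Suc k choose 2))"
proof (cases "k = 0")
  case True
  then show ?thesis
    by (simp add: corner_mat_def det_single binomial_eq_0)
next
  case False
  define q where "q = n div (k + 1)"
  have residue: "n mod (2 * k + 2) = (k + 1) * (q mod 2) + n mod (k + 1)"
    unfolding q_def by (rule mod_double_modulus)
  have choose: "Suc k choose 2 = k + (k choose 2)"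
    by (simp add: numeral_2_eq_2)
  have square: "(-1 :: int) ^ k * (-1) ^ k = 1"
    by (simp flip: power_add)
  consider "n mod (k + 1) = 0" "even q" | "n mod (k + 1) = 0" "odd q"
    | "n mod (k + 1) = 1" "even q" | "n mod (k + 1) = 1" "odd q"
    using assms by linarith
  then show ?thesis
  proof cases
    case 1
    with residue have "n mod (2 * k + 2) = 0"
      by simp
    with 1 show ?thesis
      unfolding q_def[symmetric] by (simp add: det_corner_mat_residue_0)
  next
    case 2
    with residue have "n mod (2 * k + 2) = k + 1"
      by (simp add: odd_iff_mod_2_eq_one)
    with 2 show ?thesis
      unfolding q_def[symmetric] by (simp add: det_corner_mat_residue_Suc_k power_mult)
  next
    case 3
    with residue have "n mod (2 * k + 2) = 1"
      by simp
    with 3 show ?thesis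
      unfolding q_def[symmetric] by (simp add: det_corner_mat_residue_1)
  next
    case 4
    with residue have "n mod (2 * k + 2) = k + 2"
      by (simp add: odd_iff_mod_2_eq_one)
    with 4 show ?thesis
      unfolding q_def[symmetric]
      by (simp add: det_corner_mat_residue_Suc_Suc_k power_mult choose power_add square mult.assoc[symmetric])
  qed
qed

text \<open>Column \<open>j\<close> with \<open>0 < j < n - k\<close> has its only entry below row \<open>k\<close> in row
  \<open>j + k\<close>, so moving the last \<open>k\<close> columns next to column \<open>0\<close> gives a block triangular
  matrix with diagonal blocks \<open>corner_mat k n\<close> and the identity.\<close>
lemma det_reduced_eq_det_corner:
  assumes n: "Suc k \<le> n"
  shows "det (mat n n (\<lambda>(i, j). reduced_entry k i j)) = (-1) ^ ((n - Suc k) * k) * det (corner_mat k n)"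
proof -
  define d where "d = n - Suc k"
  have nd: "n = 1 + d + k"
    using n by (simp add: d_def)
  define A where "A = mat n n (\<lambda>(i, j). reduced_entry k i j)"
  define B where "B = mat (Suc k) d (\<lambda>(i, j). reduced_entry k i (j + 1))"
  have A: "A \<in> carrier_mat n n"
    by (simp add: A_def)
  have "det A = (-1) ^ (d * k) *
      det (mat n n (\<lambda>(i, j). A $$ (i, if j < 1 then j else if j < 1 + k then j + d else j - k)))"
    by (rule det_swap_final_cols[OF A nd])
  also have "mat n n (\<lambda>(i, j). A $$ (i, if j < 1 then j else if j < 1 + k then j + d else j - k)) =
      four_block_mat (corner_mat k n) B (0\<^sub>m d (Suc k)) (1\<^sub>m d)"
  proof (rule eq_matI)
    fix i j
    assume "i < dim_row (four_block_mat (corner_mat k n) B (0\<^sub>m d (Suc k)) (1\<^sub>m d))"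
      and "j < dim_col (four_block_mat (corner_mat k n) B (0\<^sub>m d (Suc k)) (1\<^sub>m d))"
    then have "i < n" "j < n"
      using nd by (auto simp: corner_mat_def B_def)
    then show "mat n n (\<lambda>(i, j). A $$ (i, if j < 1 then j else if j < 1 + k then j + d else j - k)) $$ (i, j) =
        four_block_mat (corner_mat k n) B (0\<^sub>m d (Suc k)) (1\<^sub>m d) $$ (i, j)"
      using nd fold_residue_le[of k "j + d + k"] fold_residue_le[of k "j - k + k"] fold_residue_le[of k j]
      by (auto simp: A_def B_def corner_mat_def reduced_entry_def algebra_simps)
  qed (use nd in \<open>auto simp: corner_mat_def B_def\<close>)
  also have "det (four_block_mat (corner_mat k n) B (0\<^sub>m d (Suc k)) (1\<^sub>m d)) = det (corner_mat k n)"
    by (subst det_four_block_mat_lower_left_zero[OF corner_mat_carrier]) (auto simp: B_def)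
  finally show ?thesis
    by (simp add: A_def d_def)
qed

lemma det_reduced_small:
  assumes "1 \<le> n" "n \<le> k"
  shows "det (mat n n (\<lambda>(i, j). reduced_entry k i j)) = (if n = 1 then 1 else 0)"
proof (cases "n = 1")
  case True
  then show ?thesis
    by (simp add: det_single reduced_entry_def)
next
  case False
  then have n: "2 \<le> n"
    using assms by simp
  have "fold_residue k (1 + k) = k"
    using fold_residue_reflect[of k "1 + k"] by simp
  then have "det (mat n n (\<lambda>(i, j). reduced_entry k i j)) =
      (\<Sum>i<n. mat n n (\<lambda>(i, j). reduced_entry k i j) $$ (i, 1) * cofactor (mat n n (\<lambda>(i, j). reduced_entry k i j)) i 1)"
    using n by (intro laplace_expansion_column) auto
  also have "\<dots> = 0"
    using n assms \<open>fold_residue k (1 + k) = k\<close> by (intro sum.neutral) (auto simp: reduced_entry_def)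
  finally show ?thesis
    using False by simp
qed

lemma neg_one_power_diff_mult:
  assumes "Suc k \<le> n"
  shows "(-1 :: int) ^ ((n - Suc k) * k) = (-1) ^ (n mod (k + 1) * k)"
proof -
  have n: "n = (k + 1) * (n div (k + 1)) + n mod (k + 1)"
    by (rule mult_div_mod_eq[symmetric])
  moreover have "n div (k + 1) \<noteq> 0"
    using assms by (simp add: div_eq_0_iff)
  ultimately obtain p where "n = (k + 1) * Suc p + n mod (k + 1)"
    by (metis not0_implies_Suc)
  then have "n - Suc k = (k + 1) * p + n mod (k + 1)"
    by simp
  then have "(n - Suc k) * k = p * (k * (k + 1)) + n mod (k + 1) * k"
    by (simp add: algebra_simps)
  moreover have "even (p * (k * (k + 1)))"
    by simp
  ultimately show ?thesis
    by (simp only: power_add neg_one_even_power mult_1)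
qed

lemma det_reduced:
  assumes "1 \<le> n"
  shows "det (mat n n (\<lambda>(i, j). reduced_entry k i j)) =
    (if n mod (k + 1) = 0 \<or> n mod (k + 1) = 1 then (-1) ^ (n div (k + 1) * ((k + 1) choose 2)) else 0)"
proof (cases "n \<le> k")
  case True
  then show ?thesis
    using det_reduced_small[OF assms True] assms by auto
next
  case False
  then have "Suc k \<le> n"
    by simp
  have square: "(-1 :: int) ^ a * (-1) ^ a = 1" for a
    by (simp flip: power_add)
  show ?thesis
    using det_reduced_eq_det_corner[OF \<open>Suc k \<le> n\<close>] det_corner_mat[of n k] det_corner_mat_eq_0[of n k]
    by (auto simp: neg_one_power_diff_mult[OF \<open>Suc k \<le> n\<close>] square mult.assoc[symmetric])
qed

theorem corollary15:
  fixes n k :: nat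
  assumes "n \<ge> 1"
  shows "det (mat n n (\<lambda>(i, j). int (MP (i + j) k))) =
           det (mat n n (\<lambda>(i, j). \<Sum>a\<in>{0..i + j}. \<Sum>l\<in>{- int k..int k + 1}.
                                  trinom (i + j) (int a) (int a + l)))
       \<and> det (mat n n (\<lambda>(i, j). \<Sum>a\<in>{0..i + j}. \<Sum>l\<in>{- int k..int k + 1}.
                                  trinom (i + j) (int a) (int a + l))) =
           (if n mod (k + 1) = 0 \<or> n mod (k + 1) = 1
            then (-1) ^ (n div (k + 1) * ((k + 1) choose 2))
            else 0)"
  using det_reduced[OF assms, of k] det_hankel_eq_det_reduced[of n k]
  by (simp add: MP_eq_const_term trinom_sum_eq_const_term)

end
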